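(* Let $\psi=(P_0,P_1)$ be a two-party, $r$-round, $\gamma$-consistent coin-flipping protocol (in the plain model). Then there exist a party $P\in\{P_0,P_1\}$, a round index $i^*\in[r]$, an index $j^*\in\{i^*,i^*-1\}$, and a bit $b\in\{0,1\}$ such that the following holds. Let $b_{j^*}$ denote the output of $P$ in case the other party aborts in round $j^*$, and consider the fail-stop attacker that corrupts $P$, follows the protocol honestly, and instructs $P$ to abort in round $i^*$ if $b_{j^*}=b$ (and otherwise continues honestly until the end). Then this attacker biases the output of the other party by at least $\gamma/(8r+2)$.
   Context: A two-party coin-flipping protocol is $\gamma$-consistent if in an honest execution each party's output is a uniform bit and the two parties output the same value with probability at least $1/2+\gamma$. If a party aborts (stops sending messages), the other party still outputs a bit determined by the protocol's prescribed default behavior. A fail-stop attacker follows the protocol except that it may stop sending messages at some round. An attacker biases the output of the other party by $\epsilon$ if the expected output of that party differs from $1/2$ by at least $\epsilon$. *)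

theory Defs
  imports "HOL-Probability.Probability"
begin

(* The parties hold independent private coins (types 'a and 'b).
   In every round i \<in> {1..r}: first P0 sends a message, then P1 sends a message.
   - next0 i x ys : P0's round-i message, given its coins x and the messages ys it
                    received from P1 so far (rounds 1..i-1);
   - next1 i y xs : P1's round-i message, given its coins y and P0's messages
                    (rounds 1..i);
   - out0 x ys    : P0's output given its coins and the list ys of P1's messages it
                    received; this is the honest output when length ys = r and the
                    prescribed default output when P1 stopped earlier;
   - out1 y xs    : likewise for P1.
   (A party's own messages are determined by its coins and received messages, so
   the output may depend on the party's whole view.) *)
record ('a, 'b, 'm) protocol =
  rounds :: nat
  coins0 :: "'a pmf"
  coins1 :: "'b pmf"
  next0 :: "nat \<Rightarrow> 'a \<Rightarrow> 'm list \<Rightarrow> 'm"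
  next1 :: "nat \<Rightarrow> 'b \<Rightarrow> 'm list \<Rightarrow> 'm"
  out0 :: "'a \<Rightarrow> 'm list \<Rightarrow> bool"
  out1 :: "'b \<Rightarrow> 'm list \<Rightarrow> bool"

datatype party = P0 | P1

fun exec :: "('a, 'b, 'm) protocol \<Rightarrow> 'a \<Rightarrow> 'b \<Rightarrow> nat \<Rightarrow> 'm list \<times> 'm list" where
  "exec P x y 0 = ([], [])"
| "exec P x y (Suc k) =
     (let (xs, ys) = exec P x y k;
          u = next0 P (Suc k) x ys;
          v = next1 P (Suc k) y (xs @ [u])
      in (xs @ [u], ys @ [v]))"

definition msgs0 :: "('a, 'b, 'm) protocol \<Rightarrow> 'a \<Rightarrow> 'b \<Rightarrow> 'm list" where
  "msgs0 P x y = fst (exec P x y (rounds P))"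

definition msgs1 :: "('a, 'b, 'm) protocol \<Rightarrow> 'a \<Rightarrow> 'b \<Rightarrow> 'm list" where
  "msgs1 P x y = snd (exec P x y (rounds P))"

definition coins :: "('a, 'b, 'm) protocol \<Rightarrow> ('a \<times> 'b) pmf" where
  "coins P = pair_pmf (coins0 P) (coins1 P)"

definition honest_out0 :: "('a, 'b, 'm) protocol \<Rightarrow> 'a \<Rightarrow> 'b \<Rightarrow> bool" where
  "honest_out0 P x y = out0 P x (msgs1 P x y)"

definition honest_out1 :: "('a, 'b, 'm) protocol \<Rightarrow> 'a \<Rightarrow> 'b \<Rightarrow> bool" where
  "honest_out1 P x y = out1 P y (msgs0 P x y)"

definition consistent :: "('a, 'b, 'm) protocol \<Rightarrow> real \<Rightarrow> bool" where
  "consistent P \<gamma> \<longleftrightarrow>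
     measure_pmf.prob (coins P) {(x, y). honest_out0 P x y} = 1 / 2 \<and>
     measure_pmf.prob (coins P) {(x, y). honest_out1 P x y} = 1 / 2 \<and>
     measure_pmf.prob (coins P) {(x, y). honest_out0 P x y = honest_out1 P x y} \<ge> 1 / 2 + \<gamma>"

(* A fail-stop strategy for the corrupted party is a stopping
   rule  s i c v : given the round i, the corrupted party's coins c and the messages
   v it has received so far, abort in round i (i.e. send no message in round i or
   later).  Until it aborts it follows the protocol honestly. *)

(* P0 corrupted: when deciding on round i, P0 has received P1's messages of rounds
   1..i-1; if it aborts in round i, P1 has received P0's messages 1..i-1. *)
definition fs_out_vs0 :: "('a, 'b, 'm) protocol \<Rightarrow> (nat \<Rightarrow> 'a \<Rightarrow> 'm list \<Rightarrow> bool)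
      \<Rightarrow> 'a \<Rightarrow> 'b \<Rightarrow> bool" where
  "fs_out_vs0 P s x y =
     (if \<exists>i\<in>{1..rounds P}. s i x (take (i - 1) (msgs1 P x y))
      then (let i = (LEAST i. i \<in> {1..rounds P} \<and> s i x (take (i - 1) (msgs1 P x y)))
            in out1 P y (take (i - 1) (msgs0 P x y)))
      else honest_out1 P x y)"

(* P1 corrupted: when deciding on round i, P1 has received P0's messages of rounds
   1..i; if it aborts in round i, P0 has received P1's messages 1..i-1. *)
definition fs_out_vs1 :: "('a, 'b, 'm) protocol \<Rightarrow> (nat \<Rightarrow> 'b \<Rightarrow> 'm list \<Rightarrow> bool)
      \<Rightarrow> 'a \<Rightarrow> 'b \<Rightarrow> bool" where
  "fs_out_vs1 P s x y =
     (if \<exists>i\<in>{1..rounds P}. s i y (take i (msgs0 P x y))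
      then (let i = (LEAST i. i \<in> {1..rounds P} \<and> s i y (take i (msgs0 P x y)))
            in out0 P x (take (i - 1) (msgs1 P x y)))
      else honest_out0 P x y)"

(* Backup values  b_j : the output of a party in case the other party aborts in round j,
   i.e. the other party sends no further message after this party's round-j message.
   v is the list of messages the party has received (at least those up to round j).
   For P0 this means P1's messages of rounds 1..j-1 were received, for P1 it means
   P0's messages of rounds 1..j were received. *)
definition backup0 :: "('a, 'b, 'm) protocol \<Rightarrow> 'a \<Rightarrow> 'm list \<Rightarrow> nat \<Rightarrow> bool" where
  "backup0 P x v j = out0 P x (take (j - 1) v)"

definition backup1 :: "('a, 'b, 'm) protocol \<Rightarrow> 'b \<Rightarrow> 'm list \<Rightarrow> nat \<Rightarrow> bool" where
  "backup1 P y v j = out1 P y (take j v)"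

definition attack_out :: "('a, 'b, 'm) protocol \<Rightarrow> party \<Rightarrow> nat \<Rightarrow> nat \<Rightarrow> bool
      \<Rightarrow> 'a \<Rightarrow> 'b \<Rightarrow> bool" where
  "attack_out P p i j b x y =
     (case p of
        P0 \<Rightarrow> fs_out_vs0 P (\<lambda>k x' v. k = i \<and> backup0 P x' v j = b) x y
      | P1 \<Rightarrow> fs_out_vs1 P (\<lambda>k y' v. k = i \<and> backup1 P y' v j = b) x y)"

definition biases :: "('a, 'b, 'm) protocol \<Rightarrow> ('a \<Rightarrow> 'b \<Rightarrow> bool) \<Rightarrow> real \<Rightarrow> bool" where
  "biases P f \<epsilon> \<longleftrightarrow> \<bar>measure_pmf.prob (coins P) {(x, y). f x y} - 1 / 2\<bar> \<ge> \<epsilon>"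

end

theory Submission
  imports Defs
begin

text \<open>
Write \<open>a\<^sub>k\<close> for the output of \<open>P\<^sub>0\<close> when \<open>P\<^sub>1\<close> aborts in round \<open>k\<close>
(so \<open>a\<^sub>r\<^sub>+\<^sub>1\<close> is its honest output) and \<open>c\<^sub>k\<close> for the output of \<open>P\<^sub>1\<close> after having
received \<open>k\<close> messages of \<open>P\<^sub>0\<close> (so \<open>c\<^sub>r\<close> is its honest output). If the attacks of the
theorem, for both values of \<open>b\<close>, bias by less than \<open>\<epsilon>\<close>, then replacing an abort output by the
honest one changes the probability that it agrees with a fixed backup value by less than
\<open>2\<epsilon>\<close>. Walking along the interleaved hybrids
\<open>Pr[a\<^sub>i = c\<^sub>r] \<approx> Pr[a\<^sub>i = c\<^sub>i\<^sub>-\<^sub>1] \<approx> Pr[c\<^sub>i\<^sub>-\<^sub>1 = a\<^sub>r\<^sub>+\<^sub>1] \<approx> Pr[c\<^sub>i\<^sub>-\<^sub>1 = a\<^sub>i\<^sub>-\<^sub>1] \<approx> \<dots>\<close>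
relates the honest agreement \<open>Pr[c\<^sub>r = a\<^sub>r\<^sub>+\<^sub>1]\<close> to \<open>Pr[c\<^sub>0 = a\<^sub>r\<^sub>+\<^sub>1]\<close> up to \<open>8r\<epsilon>\<close>. At the start
\<open>c\<^sub>0\<close> and \<open>a\<^sub>1\<close> depend on disjoint coins, hence are independent, and this forces
\<open>Pr[c\<^sub>0 = a\<^sub>r\<^sub>+\<^sub>1] \<le> 1/2 + 2\<epsilon>\<close>. So \<open>\<gamma> < 8r\<epsilon> + 2\<epsilon>\<close>, i.e. some attack biases by
\<open>\<gamma>/(8r+2)\<close>.
\<close>

definition pr :: "'w pmf \<Rightarrow> ('w \<Rightarrow> bool) \<Rightarrow> real" where
  "pr M P = measure_pmf.prob M {w. P w}"

lemma pr_nonneg: "pr M P \<ge> 0"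
  by (simp add: pr_def)

lemma pr_True [simp]: "pr M (\<lambda>_. True) = 1"
  by (simp add: pr_def)

lemma pr_sym: "pr M (\<lambda>w. A w = B w) = pr M (\<lambda>w. B w = A w)"
  by (rule arg_cong[where f = "pr M"]) auto

lemma pr_eq_expectation: "pr M P = measure_pmf.expectation M (\<lambda>w. of_bool (P w))"
proof -
  have "(\<lambda>w. of_bool (P w) :: real) = indicator {w. P w}"
    by (auto simp: indicator_def)
  then show ?thesis
    by (simp add: pr_def)
qed

lemma pr_add_eq_pr_add:
  assumes "\<And>w. of_bool (A w) + of_bool (B w) = (of_bool (C w) + of_bool (D w) :: real)"
  shows "pr M A + pr M B = pr M C + pr M D"
proof -
  have int: "integrable (measure_pmf M) (\<lambda>w. of_bool (P w) :: real)" for P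
    by (rule measure_pmf.integrable_const_bound[where B = 1]) auto
  show ?thesis
    unfolding pr_eq_expectation Bochner_Integration.integral_add[OF int int, symmetric] assms ..
qed

lemma pr_eq_add:
  assumes "\<And>w. of_bool (A w) = (of_bool (B w) + of_bool (C w) :: real)"
  shows "pr M A = pr M B + pr M C"
  using pr_add_eq_pr_add[of A "\<lambda>_. False" B C M] assms by (simp add: pr_def)

lemma pr_add_pr_not: "pr M P + pr M (\<lambda>w. \<not> P w) = 1"
  using pr_eq_add[of "\<lambda>_. True" P "\<lambda>w. \<not> P w" M] by simp

lemma agreement_shift:
  assumes "\<And>b. \<bar>pr M (\<lambda>w. if X w = b then Y w else Z w) - 1/2\<bar> < \<epsilon>"
  shows "\<bar>pr M (\<lambda>w. X w = Y w) - pr M (\<lambda>w. X w = Z w)\<bar> < 2 * \<epsilon>"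
proof -
  have "pr M (\<lambda>w. X w = Y w) + pr M (\<lambda>w. if X w = False then Y w else Z w)
      = pr M (\<lambda>w. if X w = True then Y w else Z w) + pr M (\<lambda>w. X w = Z w)"
    by (rule pr_add_eq_pr_add) auto
  then show ?thesis
    using assms[of True] assms[of False] by linarith
qed

lemma agreement_anchor:
  assumes half: "pr M e = 1/2"
    and indep: "\<And>b. pr M (\<lambda>w. c w = b \<and> a w) = pr M (\<lambda>w. c w = b) * pr M a"
    and bias: "\<And>b. \<bar>pr M (\<lambda>w. if c w = b then a w else e w) - 1/2\<bar> < \<epsilon>"
  shows "pr M (\<lambda>w. c w = e w) - 1/2 \<le> 2 * \<epsilon>"
proof -
  define p q where "p = pr M c" and "q = pr M (\<lambda>w. \<not> c w)"
  define tT tF where "tT = pr M (\<lambda>w. if c w then a w else e w)"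
    and "tF = pr M (\<lambda>w. if \<not> c w then a w else e w)"
  define ec en where "ec = pr M (\<lambda>w. c w \<and> e w)" and "en = pr M (\<lambda>w. \<not> c w \<and> e w)"
  have "tT = pr M (\<lambda>w. c w = True \<and> a w) + en"
    unfolding tT_def en_def by (rule pr_eq_add) auto
  then have tT: "tT = p * pr M a + en"
    unfolding indep p_def by simp
  have "tF = pr M (\<lambda>w. c w = False \<and> a w) + ec"
    unfolding tF_def ec_def by (rule pr_eq_add) auto
  then have tF: "tF = q * pr M a + ec"
    unfolding indep q_def by simp
  have agree: "pr M (\<lambda>w. c w = e w) = ec + pr M (\<lambda>w. \<not> c w \<and> \<not> e w)"
    unfolding ec_def by (rule pr_eq_add) auto
  have "q = en + pr M (\<lambda>w. \<not> c w \<and> \<not> e w)"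
    unfolding q_def en_def by (rule pr_eq_add) auto
  moreover have "1/2 = ec + en"
    unfolding half[symmetric] ec_def en_def by (rule pr_eq_add) auto
  moreover have pq: "p + q = 1"
    unfolding p_def q_def by (rule pr_add_pr_not)
  ultimately have "pr M (\<lambda>w. c w = e w) = 2 * ec - p + 1/2" "en = 1/2 - ec" "q = 1 - p"
    unfolding agree by linarith+
  then have "pr M (\<lambda>w. c w = e w) - 1/2 = 2 * p * (tF - 1/2) + 2 * q * (1/2 - tT)"
    unfolding tT tF by (simp only:) (simp add: algebra_simps)
  also have "\<dots> \<le> 2 * p * \<epsilon> + 2 * q * \<epsilon>"
  proof -
    have "tF - 1/2 \<le> \<epsilon>" "1/2 - tT \<le> \<epsilon>"
      using bias[of False] bias[of True] unfolding tF_def tT_def by auto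
    then show ?thesis
      using p_def q_def pr_nonneg by (intro add_mono mult_left_mono) auto
  qed
  also have "\<dots> = 2 * (p + q) * \<epsilon>"
    by (simp add: algebra_simps)
  finally show ?thesis
    using pq by simp
qed

lemma alternating_chain_bound:
  fixes X Y :: "nat \<Rightarrow> real"
  assumes XY: "\<And>i. 1 \<le> i \<Longrightarrow> i \<le> r \<Longrightarrow> X i < Y (i - 1) + d"
    and YX: "\<And>k. 1 \<le> k \<Longrightarrow> k < r \<Longrightarrow> Y k < X k + d"
  shows "1 \<le> k \<Longrightarrow> k \<le> r \<Longrightarrow> X k < Y 0 + (2 * real k - 1) * d"
proof (induction k)
  case 0
  then show ?case by simp
next
  case (Suc k)
  show ?case
  proof (cases "k = 0")
    case True
    then show ?thesis
      using XY[of 1] Suc.prems by simp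
  next
    case False
    then have "X k < Y 0 + (2 * real k - 1) * d" "Y k < X k + d" "X (Suc k) < Y k + d"
      using Suc YX[of k] XY[of "Suc k"] by simp_all
    then show ?thesis
      by (simp add: algebra_simps)
  qed
qed

lemma agreement_bound:
  fixes a c :: "nat \<Rightarrow> 'w \<Rightarrow> bool"
  assumes "r \<ge> 1"
    and half: "pr M (a (Suc r)) = 1/2"
    and indep: "\<And>b. pr M (\<lambda>w. c 0 w = b \<and> a 1 w) = pr M (\<lambda>w. c 0 w = b) * pr M (a 1)"
    and bias0: "\<And>i j b. i \<in> {1..r} \<Longrightarrow> j \<in> {i, i - 1} \<Longrightarrow>
      \<bar>pr M (\<lambda>w. if a j w = b then c (i - 1) w else c r w) - 1/2\<bar> < \<epsilon>"
    and bias1: "\<And>i j b. i \<in> {1..r} \<Longrightarrow> j \<in> {i, i - 1} \<Longrightarrow>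
      \<bar>pr M (\<lambda>w. if c j w = b then a i w else a (Suc r) w) - 1/2\<bar> < \<epsilon>"
  shows "pr M (\<lambda>w. c r w = a (Suc r) w) - 1/2 < 8 * real r * \<epsilon>"
proof -
  define X where "X k = pr M (\<lambda>w. a k w = c r w)" for k
  define Y where "Y k = pr M (\<lambda>w. c k w = a (Suc r) w)" for k
  have shift0: "\<bar>pr M (\<lambda>w. a j w = c (i - 1) w) - X j\<bar> < 2 * \<epsilon>"
    if "i \<in> {1..r}" "j \<in> {i, i - 1}" for i j
    unfolding X_def by (rule agreement_shift) (rule bias0[OF that])
  have shift1: "\<bar>pr M (\<lambda>w. c j w = a i w) - Y j\<bar> < 2 * \<epsilon>"
    if "i \<in> {1..r}" "j \<in> {i, i - 1}" for i j
    unfolding Y_def by (rule agreement_shift) (rule bias1[OF that])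
  have "X i < Y (i - 1) + 4 * \<epsilon>" if "1 \<le> i" "i \<le> r" for i
    using shift0[of i i] shift1[of i "i - 1"] pr_sym[of M "a i" "c (i - 1)"] that by auto
  moreover have "Y k < X k + 4 * \<epsilon>" if "1 \<le> k" "k < r" for k
    using shift0[of "Suc k" k] shift1[of k k] pr_sym[of M "a k" "c k"] that by auto
  ultimately have "X r < Y 0 + (2 * real r - 1) * (4 * \<epsilon>)"
    using alternating_chain_bound \<open>r \<ge> 1\<close> by blast
  moreover have "Y r < X r + 2 * \<epsilon>"
    using shift1[of r r] pr_sym[of M "a r" "c r"] \<open>r \<ge> 1\<close> unfolding X_def by auto
  moreover have "Y 0 - 1/2 \<le> 2 * \<epsilon>"
    unfolding Y_def using \<open>r \<ge> 1\<close> by (intro agreement_anchor[OF half indep] bias1[of 1]) auto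
  ultimately show ?thesis
    unfolding Y_def by (simp add: algebra_simps)
qed

lemma pr_pair_pmf: "pr (pair_pmf A B) (\<lambda>(x, y). f x \<and> g y) = pr A f * pr B g"
proof -
  \<comment> \<open>\<open>measure_pmf_prob_product\<close> needs countable factors, so restrict them to the supports\<close>
  have "pr (pair_pmf A B) (\<lambda>(x, y). f x \<and> g y)
      = measure_pmf.prob (pair_pmf A B) (({x. f x} \<inter> set_pmf A) \<times> ({y. g y} \<inter> set_pmf B))"
    unfolding pr_def
    by (subst measure_Int_set_pmf[symmetric]) (auto intro!: arg_cong[where f = "measure_pmf.prob _"])
  also have "\<dots> = measure_pmf.prob A ({x. f x} \<inter> set_pmf A) * measure_pmf.prob B ({y. g y} \<inter> set_pmf B)"
    by (rule measure_pmf_prob_product) auto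
  also have "\<dots> = pr A f * pr B g"
    by (simp add: pr_def measure_Int_set_pmf)
  finally show ?thesis .
qed

lemma length_exec: "length (fst (exec P x y k)) = k \<and> length (snd (exec P x y k)) = k"
  by (induction k) (auto simp: Let_def split: prod.splits)

lemma length_msgs0 [simp]: "length (msgs0 P x y) = rounds P"
  using length_exec[of P x y "rounds P"] by (simp add: msgs0_def)

lemma length_msgs1 [simp]: "length (msgs1 P x y) = rounds P"
  using length_exec[of P x y "rounds P"] by (simp add: msgs1_def)

text \<open>\<open>abort_out0 Q k\<close> is the output of \<open>P\<^sub>0\<close> when \<open>P\<^sub>1\<close> aborts in round \<open>k\<close>, for
  \<open>1 \<le> k \<le> rounds Q + 1\<close>; \<open>abort_out1 Q k\<close> is the output of \<open>P\<^sub>1\<close> when \<open>P\<^sub>0\<close> aborts in round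
  \<open>k + 1\<close>, for \<open>0 \<le> k \<le> rounds Q\<close>.\<close>

definition abort_out0 :: "('a, 'b, 'm) protocol \<Rightarrow> nat \<Rightarrow> 'a \<times> 'b \<Rightarrow> bool" where
  "abort_out0 Q k = (\<lambda>(x, y). out0 Q x (take (k - 1) (msgs1 Q x y)))"

definition abort_out1 :: "('a, 'b, 'm) protocol \<Rightarrow> nat \<Rightarrow> 'a \<times> 'b \<Rightarrow> bool" where
  "abort_out1 Q k = (\<lambda>(x, y). out1 Q y (take k (msgs0 Q x y)))"

lemma abort_out0_last: "abort_out0 Q (Suc (rounds Q)) = (\<lambda>(x, y). honest_out0 Q x y)"
  by (simp add: abort_out0_def honest_out0_def)

lemma abort_out1_last: "abort_out1 Q (rounds Q) = (\<lambda>(x, y). honest_out1 Q x y)"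
  by (simp add: abort_out1_def honest_out1_def)

lemma abort_out_first_indep:
  "pr (coins Q) (\<lambda>w. abort_out1 Q 0 w = b \<and> abort_out0 Q 1 w)
    = pr (coins Q) (\<lambda>w. abort_out1 Q 0 w = b) * pr (coins Q) (abort_out0 Q 1)"
proof -
  have joint: "pr (coins Q) (\<lambda>w. abort_out1 Q 0 w = b \<and> abort_out0 Q 1 w)
      = pr (coins0 Q) (\<lambda>x. out0 Q x []) * pr (coins1 Q) (\<lambda>y. out1 Q y [] = b)"
    unfolding coins_def pr_pair_pmf[symmetric] abort_out0_def abort_out1_def
    by (rule arg_cong[where f = "pr _"]) auto
  have "pr (coins Q) (\<lambda>w. abort_out1 Q 0 w = b) = pr (coins1 Q) (\<lambda>y. out1 Q y [] = b)"
    using pr_pair_pmf[of "coins0 Q" "coins1 Q" "\<lambda>_. True" "\<lambda>y. out1 Q y [] = b"]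
    unfolding coins_def abort_out1_def by (simp add: case_prod_unfold)
  moreover have "pr (coins Q) (abort_out0 Q 1) = pr (coins0 Q) (\<lambda>x. out0 Q x [])"
    using pr_pair_pmf[of "coins0 Q" "coins1 Q" "\<lambda>x. out0 Q x []" "\<lambda>_. True"]
    unfolding coins_def abort_out0_def by (simp add: case_prod_unfold)
  ultimately show ?thesis
    unfolding joint by simp
qed

lemma Least_eq_self [simp]: "(LEAST k::'a::wellorder. k = i) = i"
  by (rule Least_equality) auto

lemma attack_out_P0:
  assumes "i \<in> {1..rounds Q}" "j \<le> i"
  shows "(\<lambda>(x, y). attack_out Q P0 i j b x y)
    = (\<lambda>w. if abort_out0 Q j w = b then abort_out1 Q (i - 1) w else abort_out1 Q (rounds Q) w)"
proof (intro ext, clarify)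
  fix x y
  have "take (j - 1) (take (i - 1) (msgs1 Q x y)) = take (j - 1) (msgs1 Q x y)"
    using assms by (simp add: min_def)
  then have stop: "(k \<in> {1..rounds Q} \<and> k = i \<and> backup0 Q x (take (k - 1) (msgs1 Q x y)) j = b)
      \<longleftrightarrow> k = i \<and> abort_out0 Q j (x, y) = b" for k
    using assms by (auto simp: backup0_def abort_out0_def)
  show "attack_out Q P0 i j b x y
      = (if abort_out0 Q j (x, y) = b then abort_out1 Q (i - 1) (x, y) else abort_out1 Q (rounds Q) (x, y))"
    unfolding attack_out_def fs_out_vs0_def party.case Bex_def stop
    by (auto simp: abort_out1_def honest_out1_def)
qed

lemma attack_out_P1:
  assumes "i \<in> {1..rounds Q}" "j \<le> i"
  shows "(\<lambda>(x, y). attack_out Q P1 i j b x y)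
    = (\<lambda>w. if abort_out1 Q j w = b then abort_out0 Q i w else abort_out0 Q (Suc (rounds Q)) w)"
proof (intro ext, clarify)
  fix x y
  have "take j (take i (msgs0 Q x y)) = take j (msgs0 Q x y)"
    using assms by (simp add: min_def)
  then have stop: "(k \<in> {1..rounds Q} \<and> k = i \<and> backup1 Q y (take k (msgs0 Q x y)) j = b)
      \<longleftrightarrow> k = i \<and> abort_out1 Q j (x, y) = b" for k
    using assms by (auto simp: backup1_def abort_out1_def)
  show "attack_out Q P1 i j b x y
      = (if abort_out1 Q j (x, y) = b then abort_out0 Q i (x, y) else abort_out0 Q (Suc (rounds Q)) (x, y))"
    unfolding attack_out_def fs_out_vs1_def party.case Bex_def stop
    by (auto simp: abort_out0_def honest_out0_def)
qed

theorem mainTheorem20: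
  fixes Q :: "('a, 'b, 'm) protocol" and \<gamma> :: real
  assumes "rounds Q \<ge> 1"
    and "consistent Q \<gamma>"
  shows "\<exists>p::party. \<exists>i\<in>{1..rounds Q}. \<exists>j\<in>{i, i - 1}. \<exists>b::bool.
           biases Q (attack_out Q p i j b) (\<gamma> / (8 * real (rounds Q) + 2))"
proof (rule ccontr)
  define r \<epsilon> where "r = rounds Q" and "\<epsilon> = \<gamma> / (8 * real r + 2)"
  let ?honest = "\<lambda>w. abort_out1 Q r w = abort_out0 Q (Suc r) w"
  assume "\<not> ?thesis"
  then have no_bias: "\<bar>pr (coins Q) (\<lambda>(x, y). attack_out Q p i j b x y) - 1/2\<bar> < \<epsilon>"
    if "i \<in> {1..r}" "j \<in> {i, i - 1}" for p i j b
    using that unfolding biases_def pr_def r_def \<epsilon>_def by (meson not_le)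
  have no_bias0: "\<bar>pr (coins Q) (\<lambda>w. if abort_out0 Q j w = b then abort_out1 Q (i - 1) w
      else abort_out1 Q r w) - 1/2\<bar> < \<epsilon>" if "i \<in> {1..r}" "j \<in> {i, i - 1}" for i j b
    using no_bias[OF that, of P0 b] that unfolding r_def by (subst (asm) attack_out_P0) auto
  have no_bias1: "\<bar>pr (coins Q) (\<lambda>w. if abort_out1 Q j w = b then abort_out0 Q i w
      else abort_out0 Q (Suc r) w) - 1/2\<bar> < \<epsilon>" if "i \<in> {1..r}" "j \<in> {i, i - 1}" for i j b
    using no_bias[OF that, of P1 b] that unfolding r_def by (subst (asm) attack_out_P1) auto
  have "pr (coins Q) (abort_out0 Q (Suc r)) = 1/2"
    using assms(2) by (simp add: consistent_def abort_out0_last r_def pr_def)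
  then have "pr (coins Q) ?honest - 1/2 < 8 * real r * \<epsilon>"
    using assms(1) r_def by (intro agreement_bound[OF _ _ abort_out_first_indep no_bias0 no_bias1]) auto
  moreover have "pr (coins Q) ?honest \<ge> 1/2 + \<gamma>"
    using assms(2) pr_sym[of "coins Q" "abort_out1 Q r" "abort_out0 Q (Suc r)"]
    by (simp add: consistent_def abort_out0_last abort_out1_last r_def pr_def case_prod_unfold)
  moreover have "\<epsilon> > 0"
    using no_bias[of 1 1] assms(1) r_def by fastforce
  moreover have "(8 * real r + 2) * \<epsilon> = \<gamma>"
    by (simp add: \<epsilon>_def)
  ultimately show False
    by (simp add: algebra_simps)
qed

end
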